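(* Let $a_1,a_2,a_3,a_4$ be constants and define $$Q(x,y,z)=yz(x-1)(x-y)(x-z)a_1+xz(y-1)(y-x)(y-z)a_2+xy(z-1)(z-x)(z-y)a_3+xyz(x-1)(y-1)(z-1)a_4.$$ Let $c_1$ be a constant and $x_1,y_1,z_1$ nonzero constants with $Q(x_1,y_1,z_1)=0$. Then $\tau_{k,l,m}=1+c_1x_1^ky_1^lz_1^m$ satisfies, for all $(k,l,m)\in\mathbb{Z}^3$, the dual AKP equation $$\begin{aligned}0=&\,a_1\big(\tau_{k-1,l+1,m+1}\tau_{k+1,l,m}\tau_{k+1,l,m+1}\tau_{k+1,l+1,m}-\tau_{k,l,m+1}\tau_{k,l+1,m}\tau_{k,l+1,m+1}\tau_{k+2,l,m}\big)\\&+a_2\big(\tau_{k,l+1,m}\tau_{k,l+1,m+1}\tau_{k+1,l-1,m+1}\tau_{k+1,l+1,m}-\tau_{k,l,m+1}\tau_{k,l+2,m}\tau_{k+1,l,m}\tau_{k+1,l,m+1}\big)\\&+a_3\big(\tau_{k,l,m+1}\tau_{k,l+1,m+1}\tau_{k+1,l,m+1}\tau_{k+1,l+1,m-1}-\tau_{k,l,m+2}\tau_{k,l+1,m}\tau_{k+1,l,m}\tau_{k+1,l+1,m}\big)\\&+a_4\big(\tau_{k,l,m}\tau_{k,l+1,m+1}\tau_{k+1,l,m+1}\tau_{k+1,l+1,m}-\tau_{k,l,m+1}\tau_{k,l+1,m}\tau_{k+1,l,m}\tau_{k+1,l+1,m+1}\big).\end{aligned}$$ *)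

theory Defs
  imports Complex_Main
begin

definition Qpoly :: "complex \<Rightarrow> complex \<Rightarrow> complex \<Rightarrow> complex \<Rightarrow> complex \<Rightarrow> complex \<Rightarrow> complex \<Rightarrow> complex" where
  "Qpoly a1 a2 a3 a4 x y z =
     y*z*(x-1)*(x-y)*(x-z)*a1 + x*z*(y-1)*(y-x)*(y-z)*a2
   + x*y*(z-1)*(z-x)*(z-y)*a3 + x*y*z*(x-1)*(y-1)*(z-1)*a4"

definition dualAKP :: "complex \<Rightarrow> complex \<Rightarrow> complex \<Rightarrow> complex \<Rightarrow> (int \<Rightarrow> int \<Rightarrow> int \<Rightarrow> complex) \<Rightarrow> int \<Rightarrow> int \<Rightarrow> int \<Rightarrow> complex" where
  "dualAKP a1 a2 a3 a4 \<tau> k l m =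
     a1 * (\<tau> (k-1) (l+1) (m+1) * \<tau> (k+1) l m * \<tau> (k+1) l (m+1) * \<tau> (k+1) (l+1) m
         - \<tau> k l (m+1) * \<tau> k (l+1) m * \<tau> k (l+1) (m+1) * \<tau> (k+2) l m)
   + a2 * (\<tau> k (l+1) m * \<tau> k (l+1) (m+1) * \<tau> (k+1) (l-1) (m+1) * \<tau> (k+1) (l+1) m
         - \<tau> k l (m+1) * \<tau> k (l+2) m * \<tau> (k+1) l m * \<tau> (k+1) l (m+1))
   + a3 * (\<tau> k l (m+1) * \<tau> k (l+1) (m+1) * \<tau> (k+1) l (m+1) * \<tau> (k+1) (l+1) (m-1)
         - \<tau> k l (m+2) * \<tau> k (l+1) m * \<tau> (k+1) l m * \<tau> (k+1) (l+1) m)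
   + a4 * (\<tau> k l m * \<tau> k (l+1) (m+1) * \<tau> (k+1) l (m+1) * \<tau> (k+1) (l+1) m
         - \<tau> k l (m+1) * \<tau> k (l+1) m * \<tau> (k+1) l m * \<tau> (k+1) (l+1) (m+1))"

end

theory Submission
  imports Defs
begin

(*
  Every shift of tau = 1 + c x^k y^l z^m is again of this form with c rescaled by x^k y^l z^m,
  and the dual AKP equation is invariant under lattice shifts, so it suffices to evaluate it at
  the origin for arbitrary c. There, after clearing the denominators x y z, it is the polynomial
  identity  x y z * dualAKP = c (c^2 x y z - 1) Q(x,y,z),  which vanishes because Q(x,y,z) = 0.
*)

definition one_soliton :: "complex \<Rightarrow> complex \<Rightarrow> complex \<Rightarrow> complex \<Rightarrow> int \<Rightarrow> int \<Rightarrow> int \<Rightarrow> complex" where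
  "one_soliton c x y z k l m = 1 + c * x powi k * y powi l * z powi m"

lemma dualAKP_shift:
  "dualAKP a1 a2 a3 a4 \<tau> k l m = dualAKP a1 a2 a3 a4 (\<lambda>i j n. \<tau> (k+i) (l+j) (m+n)) 0 0 0"
  unfolding dualAKP_def by (simp add: algebra_simps)

lemma one_soliton_shift:
  assumes "x \<noteq> 0" "y \<noteq> 0" "z \<noteq> 0"
  shows "one_soliton c x y z (k+i) (l+j) (m+n)
       = one_soliton (c * x powi k * y powi l * z powi m) x y z i j n"
  using assms by (simp add: one_soliton_def power_int_add)

lemma dualAKP_one_soliton_origin:
  assumes "x \<noteq> 0" "y \<noteq> 0" "z \<noteq> 0"
  shows "x * y * z * dualAKP a1 a2 a3 a4 (one_soliton c x y z) 0 0 0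
       = c * (c\<^sup>2 * x * y * z - 1) * Qpoly a1 a2 a3 a4 x y z"
proof -
  have "x * inverse x = 1" "y * inverse y = 1" "z * inverse z = 1"
    using assms by simp_all
  then show ?thesis
    unfolding dualAKP_def one_soliton_def Qpoly_def
    by (simp add: power_int_minus) algebra
qed

theorem mainTheorem2:
  fixes a1 a2 a3 a4 c1 x1 y1 z1 :: complex
  assumes "x1 \<noteq> 0" "y1 \<noteq> 0" "z1 \<noteq> 0"
    and "Qpoly a1 a2 a3 a4 x1 y1 z1 = 0"
  shows "\<forall>k l m :: int. dualAKP a1 a2 a3 a4
           (\<lambda>k l m. 1 + c1 * x1 powi k * y1 powi l * z1 powi m) k l m = 0"
proof (intro allI)
  fix k l m :: int
  define c where "c = c1 * x1 powi k * y1 powi l * z1 powi m"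
  have "dualAKP a1 a2 a3 a4 (one_soliton c1 x1 y1 z1) k l m
      = dualAKP a1 a2 a3 a4 (one_soliton c x1 y1 z1) 0 0 0"
    by (subst dualAKP_shift) (simp add: one_soliton_shift[OF assms(1-3)] c_def)
  moreover have "x1 * y1 * z1 * dualAKP a1 a2 a3 a4 (one_soliton c x1 y1 z1) 0 0 0 = 0"
    using dualAKP_one_soliton_origin[OF assms(1-3)] assms(4) by simp
  ultimately show "dualAKP a1 a2 a3 a4
           (\<lambda>k l m. 1 + c1 * x1 powi k * y1 powi l * z1 powi m) k l m = 0"
    using assms(1-3) by (simp add: one_soliton_def[abs_def])
qed

end
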